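(* Let $W=\langle w_1,\dots,w_n\rangle$ be a weave. (i) If $|V(W)|\ge 3$ and $W$ is prime, then $W$ is isomorphic to $T_m$ or $U_m$ for some odd $m$. (ii) If $|V(W)|\ge 2$, $v\notin V(W)$ is a vertex such that $v\to w_i$ for all odd $i$ and $w_i\to v$ for all even $i$, and the tournament $W+v$ on $V(W)\cup\{v\}$ is prime, then $W+v$ is isomorphic to $T_m$, $U_m$, or $W_m$ for some odd $m$.
   Context: A tournament is a finite, non-null, loopless directed graph in which for any two distinct vertices $u,v$ there is exactly one edge with both ends in $\{u,v\}$; write $u\to v$ for the edge from $u$ to $v$, and $X\Rightarrow Y$ if $x\to y$ for all $x\in X,y\in Y$. A homogeneous set of $G$ is a set $X\subseteq V(G)$ such that each vertex outside $X$ either has edges to all of $X$ or edges from all of $X$; $G$ is prime if every homogeneous set $X$ has $|X|\le 1$ or $X=V(G)$. A weave $\langle w_1,\dots,w_n\rangle$ is a tournament on $w_1,\dots,w_n$ such that: $w_i\to w_j$ whenever $i<j$ and $i,j$ have opposite parity; either $w_i\to w_j$ for all $i<j$ both odd, or $w_j\to w_i$ for all $i<j$ both odd; and either $w_i\to w_j$ for all $i<j$ both even, or $w_j\to w_i$ for all $i<j$ both even. For $m=2k+1$: $T_m$ is the tournament on $v_1,\dots,v_m$ with $v_i\to v_j$ iff $j\equiv i+1,\dots,i+k\pmod m$; $U_m$ is obtained from $T_m$ by reversing all edges with both ends in $\{v_1,\dots,v_k\}$; $W_m$ is the tournament on $x_1,\dots,x_m$ with $x_i\to x_j$ for $1\le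 i<j\le m-1$ and $\{x_2,x_4,\dots,x_{m-1}\}\Rightarrow x_m\Rightarrow\{x_1,x_3,\dots,x_{m-2}\}$. *)

theory Defs
  imports Main
begin

text \<open>A tournament is given by a vertex set V and an edge relation E,
  where E u v means u \<rightarrow> v. Only the restriction of E to V matters.\<close>

definition tournament :: "'a set \<Rightarrow> ('a \<Rightarrow> 'a \<Rightarrow> bool) \<Rightarrow> bool" where
  "tournament V E \<longleftrightarrow> finite V \<and> V \<noteq> {} \<and> (\<forall>u\<in>V. \<not> E u u) \<and>
     (\<forall>u\<in>V. \<forall>v\<in>V. u \<noteq> v \<longrightarrow> (E u v \<longleftrightarrow> \<not> E v u))"

definition homogeneous :: "'a set \<Rightarrow> ('a \<Rightarrow> 'a \<Rightarrow> bool) \<Rightarrow> 'a set \<Rightarrow> bool" where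
  "homogeneous V E X \<longleftrightarrow> X \<subseteq> V \<and>
     (\<forall>y\<in>V - X. (\<forall>x\<in>X. E y x) \<or> (\<forall>x\<in>X. E x y))"

definition prime_tournament :: "'a set \<Rightarrow> ('a \<Rightarrow> 'a \<Rightarrow> bool) \<Rightarrow> bool" where
  "prime_tournament V E \<longleftrightarrow> tournament V E \<and>
     (\<forall>X. homogeneous V E X \<longrightarrow> card X \<le> 1 \<or> X = V)"

definition tourn_iso :: "'a set \<Rightarrow> ('a \<Rightarrow> 'a \<Rightarrow> bool) \<Rightarrow> 'b set \<Rightarrow> ('b \<Rightarrow> 'b \<Rightarrow> bool) \<Rightarrow> bool" where
  "tourn_iso V E V' E' \<longleftrightarrow> (\<exists>f. bij_betw f V V' \<and> (\<forall>u\<in>V. \<forall>v\<in>V. E u v \<longleftrightarrow> E' (f u) (f v)))"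

definition weave :: "'a set \<Rightarrow> ('a \<Rightarrow> 'a \<Rightarrow> bool) \<Rightarrow> nat \<Rightarrow> (nat \<Rightarrow> 'a) \<Rightarrow> bool" where
  "weave V E n w \<longleftrightarrow> tournament V E \<and> inj_on w {1..n} \<and> w ` {1..n} = V \<and>
     (\<forall>i\<in>{1..n}. \<forall>j\<in>{1..n}. i < j \<and> odd (i + j) \<longrightarrow> E (w i) (w j)) \<and>
     ((\<forall>i\<in>{1..n}. \<forall>j\<in>{1..n}. i < j \<and> odd i \<and> odd j \<longrightarrow> E (w i) (w j)) \<or>
      (\<forall>i\<in>{1..n}. \<forall>j\<in>{1..n}. i < j \<and> odd i \<and> odd j \<longrightarrow> E (w j) (w i))) \<and>
     ((\<forall>i\<in>{1..n}. \<forall>j\<in>{1..n}. i < j \<and> even i \<and> even j \<longrightarrow> E (w i) (w j)) \<or>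
      (\<forall>i\<in>{1..n}. \<forall>j\<in>{1..n}. i < j \<and> even i \<and> even j \<longrightarrow> E (w j) (w i)))"

text \<open>T_m, U_m, W_m on vertex set {1..m} (vertex i stands for v_i resp. x_i), m = 2k+1.\<close>
definition T_edge :: "nat \<Rightarrow> nat \<Rightarrow> nat \<Rightarrow> bool" where
  "T_edge m i j \<longleftrightarrow> (int j - int i) mod int m \<in> {1 .. int ((m - 1) div 2)}"

definition U_edge :: "nat \<Rightarrow> nat \<Rightarrow> nat \<Rightarrow> bool" where
  "U_edge m i j \<longleftrightarrow> (if i \<in> {1..(m - 1) div 2} \<and> j \<in> {1..(m - 1) div 2}
                     then T_edge m j i else T_edge m i j)"

definition W_edge :: "nat \<Rightarrow> nat \<Rightarrow> nat \<Rightarrow> bool" where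
  "W_edge m i j \<longleftrightarrow> (i < j \<and> j \<le> m - 1) \<or> (j = m \<and> i < m \<and> even i) \<or> (i = m \<and> j < m \<and> odd j)"

end

theory Submission
  imports Defs
begin

text \<open>Up to isomorphism a weave \<open>\<langle>w\<^sub>1, \<dots>, w\<^sub>n\<rangle>\<close> is determined by \<open>n\<close> and by whether its odd
  and its even chain are increasing, so everything reduces to tournaments on indices. If the odd
  chain increases, \<open>w\<^sub>1\<close> is a source; if \<open>n\<close> is even and the odd chain decreases, either \<open>w\<^sub>n\<close> is
  a sink or \<open>{w\<^sub>1, w\<^sub>n}\<close> is homogeneous. So a prime weave has odd length \<open>n = 2k + 1\<close> and a
  decreasing odd chain, and multiplying indices by \<open>k \<equiv> -1/2 (mod n)\<close> maps it onto \<open>T\<^sub>n\<close> or \<open>U\<^sub>n\<close>.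
  For \<open>W + v\<close> with \<open>n\<close> odd there is again a sink or the homogeneous pair \<open>{w\<^sub>n, v}\<close>. For \<open>n\<close> even,
  \<open>v\<close> can be appended as \<open>w\<^sub>n\<^sub>+\<^sub>1\<close> (odd chain decreasing) or prepended as \<open>w\<^sub>0\<close> (odd chain
  increasing, even chain decreasing), giving a weave of odd length; if both chains increase,
  \<open>W + v\<close> is \<open>W\<^sub>n\<^sub>+\<^sub>1\<close>.\<close>

lemma tournament_edge_flip:
  "tournament V E \<Longrightarrow> u \<in> V \<Longrightarrow> v \<in> V \<Longrightarrow> u \<noteq> v \<Longrightarrow> E u v \<longleftrightarrow> \<not> E v u"
  unfolding tournament_def by blast

lemma tourn_iso_sym:
  assumes "tourn_iso V E V' E'"
  shows "tourn_iso V' E' V E"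
proof -
  obtain f where f: "bij_betw f V V'" and e: "\<forall>u\<in>V. \<forall>v\<in>V. E u v \<longleftrightarrow> E' (f u) (f v)"
    using assms unfolding tourn_iso_def by blast
  let ?g = "the_inv_into V f"
  have g: "bij_betw ?g V' V" using f by (rule bij_betw_the_inv_into)
  have "E' x y \<longleftrightarrow> E (?g x) (?g y)" if "x \<in> V'" "y \<in> V'" for x y
    using e g f that by (simp add: bij_betwE f_the_inv_into_f_bij_betw)
  with g show ?thesis unfolding tourn_iso_def by blast
qed

lemma tourn_iso_trans:
  assumes "tourn_iso V E V' E'" and "tourn_iso V' E' V'' E''"
  shows "tourn_iso V E V'' E''"
proof -
  obtain f where f: "bij_betw f V V'" and e: "\<forall>u\<in>V. \<forall>v\<in>V. E u v \<longleftrightarrow> E' (f u) (f v)"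
    using assms(1) unfolding tourn_iso_def by blast
  obtain g where g: "bij_betw g V' V''" and e': "\<forall>u\<in>V'. \<forall>v\<in>V'. E' u v \<longleftrightarrow> E'' (g u) (g v)"
    using assms(2) unfolding tourn_iso_def by blast
  have "bij_betw (g \<circ> f) V V''" using f g by (rule bij_betw_trans)
  moreover have "\<forall>u\<in>V. \<forall>v\<in>V. E u v \<longleftrightarrow> E'' ((g \<circ> f) u) ((g \<circ> f) v)"
    using e e' f by (simp add: bij_betwE)
  ultimately show ?thesis unfolding tourn_iso_def by blast
qed

lemma tourn_iso_prime_tournament:
  assumes iso: "tourn_iso V E V' E'" and P: "prime_tournament V' E'"
  shows "prime_tournament V E"
proof -
  obtain f where f: "bij_betw f V V'" and e: "\<forall>u\<in>V. \<forall>v\<in>V. E u v \<longleftrightarrow> E' (f u) (f v)"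
    using iso unfolding tourn_iso_def by blast
  have inj: "inj_on f V" and img: "f ` V = V'" using f by (auto simp: bij_betw_def)
  have T': "tournament V' E'" using P by (simp add: prime_tournament_def)
  have "tournament V E"
    unfolding tournament_def
  proof (intro conjI ballI impI)
    show "finite V" using T' f bij_betw_finite by (auto simp: tournament_def)
    show "V \<noteq> {}" using T' img by (auto simp: tournament_def)
    show "\<not> E u u" if "u \<in> V" for u using T' e img that by (auto simp: tournament_def)
    show "E u v \<longleftrightarrow> \<not> E v u" if "u \<in> V" "v \<in> V" "u \<noteq> v" for u v
      using tournament_edge_flip[OF T', of "f u" "f v"] e img inj that
      by (auto simp: inj_on_eq_iff)
  qed
  moreover have "card X \<le> 1 \<or> X = V" if X: "homogeneous V E X" for X
  proof -
    have XV: "X \<subseteq> V" using X by (simp add: homogeneous_def)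
    have "homogeneous V' E' (f ` X)"
      unfolding homogeneous_def
    proof (intro conjI ballI)
      show "f ` X \<subseteq> V'" using XV img by blast
      fix y' assume "y' \<in> V' - f ` X"
      then obtain y where y: "y \<in> V - X" "y' = f y" using img by blast
      then have "(\<forall>x\<in>X. E y x) \<or> (\<forall>x\<in>X. E x y)" using X by (simp add: homogeneous_def)
      then show "(\<forall>x'\<in>f ` X. E' y' x') \<or> (\<forall>x'\<in>f ` X. E' x' y')" using e y XV by auto
    qed
    with P have "card (f ` X) \<le> 1 \<or> f ` X = f ` V" using img by (simp add: prime_tournament_def)
    then show ?thesis using inj XV by (simp add: card_image inj_on_subset inj_on_image_eq_iff)
  qed
  ultimately show ?thesis unfolding prime_tournament_def by blast
qed

lemma prime_tournament_homogeneous: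
  "prime_tournament V E \<Longrightarrow> homogeneous V E X \<Longrightarrow> 2 \<le> card X \<Longrightarrow> X = V"
  unfolding prime_tournament_def by force

lemma prime_tournament_no_source_or_sink:
  assumes P: "prime_tournament V E" and V: "3 \<le> card V" and x: "x \<in> V"
    and dom: "(\<forall>y\<in>V - {x}. E x y) \<or> (\<forall>y\<in>V - {x}. E y x)"
  shows False
proof -
  have "homogeneous V E (V - {x})" using dom by (auto simp: homogeneous_def)
  moreover have "2 \<le> card (V - {x})" using V x by (simp add: card_Diff_singleton)
  ultimately show False using prime_tournament_homogeneous[OF P] x by blast
qed

lemma prime_tournament_no_homogeneous_pair:
  assumes P: "prime_tournament V E" and V: "3 \<le> card V" and "x \<noteq> y"
    and "homogeneous V E {x, y}"
  shows False
  using prime_tournament_homogeneous[OF P] assms by fastforce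

text \<open>\<open>so\<close> (\<open>se\<close>) says whether the chain of odd (even) indices is increasing.\<close>

definition weave_edge :: "bool \<Rightarrow> bool \<Rightarrow> nat \<Rightarrow> nat \<Rightarrow> bool" where
  "weave_edge so se i j \<longleftrightarrow>
     (if odd (i + j) then i < j else if (if odd i then so else se) then i < j else j < i)"

lemma weave_edge_irrefl [simp]: "\<not> weave_edge so se i i"
  by (simp add: weave_edge_def)

lemma weave_edge_flip: "i \<noteq> j \<Longrightarrow> weave_edge so se j i \<longleftrightarrow> \<not> weave_edge so se i j"
  by (auto simp: weave_edge_def add.commute)

lemma bij_betw_weave: "weave V E n w \<Longrightarrow> bij_betw w {1..n} V"
  by (simp add: weave_def bij_betw_def)

lemma card_weave: "weave V E n w \<Longrightarrow> card V = n"
  using bij_betw_same_card[OF bij_betw_weave] by fastforce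

lemma weave_edge_of_weave:
  assumes W: "weave V E n w"
  obtains so se where "\<forall>i\<in>{1..n}. \<forall>j\<in>{1..n}. E (w i) (w j) \<longleftrightarrow> weave_edge so se i j"
proof -
  define so where "so \<longleftrightarrow> (\<forall>i\<in>{1..n}. \<forall>j\<in>{1..n}. i < j \<and> odd i \<and> odd j \<longrightarrow> E (w i) (w j))"
  define se where "se \<longleftrightarrow> (\<forall>i\<in>{1..n}. \<forall>j\<in>{1..n}. i < j \<and> even i \<and> even j \<longrightarrow> E (w i) (w j))"
  have T: "tournament V E" and w: "bij_betw w {1..n} V"
    using W bij_betw_weave by (auto simp: weave_def)
  have edge: "E (w i) (w j)" if "i \<in> {1..n}" "j \<in> {1..n}" "weave_edge so se i j" for i j
    using W that unfolding weave_def weave_edge_def so_def se_def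
    by (auto split: if_splits)
  have "E (w i) (w j) \<longleftrightarrow> weave_edge so se i j" if ij: "i \<in> {1..n}" "j \<in> {1..n}" for i j
  proof (cases "i = j")
    case True
    then show ?thesis using T w ij by (auto simp: tournament_def bij_betwE)
  next
    case False
    then have "w i \<noteq> w j" using w ij by (auto simp: bij_betw_def inj_on_eq_iff)
    then show ?thesis
      using edge[OF ij] edge[of j i] ij False weave_edge_flip[OF False]
        tournament_edge_flip[OF T, of "w i" "w j"] w by (auto simp: bij_betwE)
  qed
  then show ?thesis using that by blast
qed

lemma prime_weave_edgeD:
  assumes P: "prime_tournament {1..n} (weave_edge so se)" and n: "3 \<le> n"
  shows "\<not> so \<and> odd n"
proof -
  have V: "3 \<le> card {1..n}" using n by simp
  have "\<not> so"
  proof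
    assume so
    then have "\<forall>j\<in>{1..n} - {1}. weave_edge so se 1 j" by (auto simp: weave_edge_def)
    then show False using prime_tournament_no_source_or_sink[OF P V, of 1] n by auto
  qed
  moreover have "odd n"
  proof
    assume ev: "even n"
    show False
    proof (cases se)
      case True
      then have "\<forall>i\<in>{1..n} - {n}. weave_edge so se i n" using ev by (auto simp: weave_edge_def)
      then show False using prime_tournament_no_source_or_sink[OF P V, of n] n by auto
    next
      case False
      have "homogeneous {1..n} (weave_edge so se) {1, n}"
        using \<open>\<not> so\<close> False ev n by (auto simp: homogeneous_def weave_edge_def)
      moreover have "(1::nat) \<noteq> n" using n by simp
      ultimately show False using prime_tournament_no_homogeneous_pair[OF P V] by blast
    qed
  qed
  ultimately show ?thesis ..
qed

lemma mod_eq_by_quotient: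
  fixes a r q m :: int
  shows "a = r + q * m \<Longrightarrow> 0 \<le> r \<Longrightarrow> r < m \<Longrightarrow> a mod m = r"
  by simp

text \<open>Modulo \<open>2k + 1\<close>, multiplication by \<open>k\<close> is division by \<open>-2\<close>.\<close>

lemma mult_k_mod_odd:
  fixes k d :: int
  assumes d0: "d \<noteq> 0" and dl: "\<bar>d\<bar> < 2 * k + 1"
  shows "(d * k) mod (2 * k + 1) \<noteq> 0"
    and "(d * k) mod (2 * k + 1) \<in> {1..k} \<longleftrightarrow> (d > 0 \<and> odd d) \<or> (d < 0 \<and> even d)"
proof -
  have "((d * k) mod (2 * k + 1) \<in> {1..k} \<longleftrightarrow> (d > 0 \<and> odd d) \<or> (d < 0 \<and> even d))
         \<and> (d * k) mod (2 * k + 1) \<noteq> 0"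
  proof (cases "d > 0"; cases "odd d")
    assume "d > 0" "odd d"
    obtain t where "d = 2 * t + 1" using \<open>odd d\<close> by (rule oddE)
    with \<open>d > 0\<close> dl have t: "d = 2 * t + 1" "0 \<le> t" "t \<le> k - 1" by auto
    have "(d * k) mod (2 * k + 1) = k - t"
      unfolding t(1) using t(2-) by (intro mod_eq_by_quotient[where q = t]) (simp_all add: algebra_simps)
    then show ?thesis using \<open>d > 0\<close> \<open>odd d\<close> t by auto
  next
    assume "d > 0" "\<not> odd d"
    obtain t where "d = 2 * t" using \<open>\<not> odd d\<close> by (auto elim: evenE)
    with \<open>d > 0\<close> dl have t: "d = 2 * t" "1 \<le> t" "t \<le> k" by auto
    have "(d * k) mod (2 * k + 1) = 2 * k + 1 - t"
      unfolding t(1) using t(2-) by (intro mod_eq_by_quotient[where q = "t - 1"]) (simp_all add: algebra_simps)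
    then show ?thesis using \<open>d > 0\<close> \<open>\<not> odd d\<close> t by auto
  next
    assume "\<not> d > 0" "odd d"
    then have "odd (- d)" by simp
    then obtain t where "- d = 2 * t + 1" by (rule oddE)
    with \<open>\<not> d > 0\<close> dl have t: "d = - (2 * t + 1)" "0 \<le> t" "t \<le> k - 1" by auto
    have "(d * k) mod (2 * k + 1) = k + 1 + t"
      unfolding t(1) using t(2-) by (intro mod_eq_by_quotient[where q = "- t - 1"]) (simp_all add: algebra_simps)
    then show ?thesis using \<open>\<not> d > 0\<close> \<open>odd d\<close> t by auto
  next
    assume "\<not> d > 0" "\<not> odd d"
    then have "even (- d)" by simp
    then obtain t where "- d = 2 * t" by (rule evenE)
    with \<open>\<not> d > 0\<close> d0 dl have t: "d = - (2 * t)" "1 \<le> t" "t \<le> k" by auto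
    have "(d * k) mod (2 * k + 1) = t"
      unfolding t(1) using t(2-) by (intro mod_eq_by_quotient[where q = "- t"]) (simp_all add: algebra_simps)
    then show ?thesis using \<open>\<not> d > 0\<close> \<open>\<not> odd d\<close> d0 t by auto
  qed
  then show "(d * k) mod (2 * k + 1) \<noteq> 0"
    and "(d * k) mod (2 * k + 1) \<in> {1..k} \<longleftrightarrow> (d > 0 \<and> odd d) \<or> (d < 0 \<and> even d)"
    by auto
qed

text \<open>The shift by one puts the even indices onto \<open>{1..k}\<close>, the reversed block of \<open>U\<^sub>2\<^sub>k\<^sub>+\<^sub>1\<close>.\<close>

definition scale_index :: "nat \<Rightarrow> nat \<Rightarrow> nat" where
  "scale_index k i = nat (((int i + 1) * int k) mod (2 * int k + 1)) + 1"

lemma int_scale_index: "int (scale_index k i) = ((int i + 1) * int k) mod (2 * int k + 1) + 1"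
  by (simp add: scale_index_def)

lemma scale_index_in_range: "scale_index k i \<in> {1..2 * k + 1}"
proof -
  have "((int i + 1) * int k) mod (2 * int k + 1) < 2 * int k + 1" by (rule pos_mod_bound) simp
  then have "int (scale_index k i) \<le> int (2 * k + 1)" unfolding int_scale_index by linarith
  then show ?thesis by (simp add: scale_index_def)
qed

lemma scale_index_diff_mod:
  "(int (scale_index k j) - int (scale_index k i)) mod (2 * int k + 1)
     = ((int j - int i) * int k) mod (2 * int k + 1)"
proof -
  have "(int (scale_index k j) - int (scale_index k i)) mod (2 * int k + 1)
      = ((int j + 1) * int k - (int i + 1) * int k) mod (2 * int k + 1)"
    unfolding int_scale_index by (simp add: mod_diff_eq)
  also have "(int j + 1) * int k - (int i + 1) * int k = (int j - int i) * int k"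
    by (simp add: algebra_simps)
  finally show ?thesis .
qed

lemma bij_betw_scale_index: "bij_betw (scale_index k) {1..2 * k + 1} {1..2 * k + 1}"
proof -
  have inj: "inj_on (scale_index k) {1..2 * k + 1}"
  proof (rule inj_onI, rule ccontr)
    fix i j assume ij: "i \<in> {1..2 * k + 1}" "j \<in> {1..2 * k + 1}"
      and eq: "scale_index k i = scale_index k j" and "i \<noteq> j"
    then have "((int j - int i) * int k) mod (2 * int k + 1) \<noteq> 0"
      by (intro mult_k_mod_odd(1)) auto
    with eq show False using scale_index_diff_mod[of k j i] by simp
  qed
  moreover have "scale_index k ` {1..2 * k + 1} = {1..2 * k + 1}"
    by (rule endo_inj_surj) (use inj scale_index_in_range in auto)
  ultimately show ?thesis by (simp add: bij_betw_def)
qed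

lemma T_edge_scale_index:
  assumes "i \<in> {1..2 * k + 1}" and "j \<in> {1..2 * k + 1}"
  shows "T_edge (2 * k + 1) (scale_index k i) (scale_index k j) \<longleftrightarrow> weave_edge False False i j"
proof (cases "i = j")
  case False
  have m: "int (2 * k + 1) = 2 * int k + 1" and half: "(2 * k + 1 - 1) div 2 = k" by simp_all
  have "T_edge (2 * k + 1) (scale_index k i) (scale_index k j)
      \<longleftrightarrow> ((int j - int i) * int k) mod (2 * int k + 1) \<in> {1..int k}"
    unfolding T_edge_def m half scale_index_diff_mod ..
  also have "\<dots> \<longleftrightarrow> (int j - int i > 0 \<and> odd (int j - int i)) \<or> (int j - int i < 0 \<and> even (int j - int i))"
    using assms False by (intro mult_k_mod_odd(2)) auto
  also have "\<dots> \<longleftrightarrow> weave_edge False False i j"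
    unfolding weave_edge_def by presburger
  finally show ?thesis .
qed (simp add: T_edge_def)

lemma scale_index_le_iff_even:
  assumes "i \<in> {1..2 * k + 1}"
  shows "scale_index k i \<le> k \<longleftrightarrow> even i"
proof (cases "even i")
  case True
  then obtain s where s: "i = 2 * s" by (rule evenE)
  with assms have "1 \<le> s" "s \<le> k" by auto
  then have "((int i + 1) * int k) mod (2 * int k + 1) = int k - int s"
    unfolding s by (intro mod_eq_by_quotient[where q = "int s"]) (simp_all add: algebra_simps)
  then have "int (scale_index k i) = int k - int s + 1" by (simp add: int_scale_index)
  then show ?thesis using True \<open>1 \<le> s\<close> by simp
next
  case False
  then obtain s where s: "i = 2 * s + 1" by (rule oddE)
  with assms have "s \<le> k" by auto
  then have "((int i + 1) * int k) mod (2 * int k + 1) = (if s < k then 2 * int k - int s else int k)"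
    unfolding s by (intro mod_eq_by_quotient[where q = "int s"]) (auto simp: algebra_simps)
  then have "int (scale_index k i) = (if s < k then 2 * int k - int s else int k) + 1"
    by (simp add: int_scale_index)
  then show ?thesis using False by (simp split: if_splits)
qed

lemma U_edge_scale_index:
  assumes "i \<in> {1..2 * k + 1}" and "j \<in> {1..2 * k + 1}"
  shows "U_edge (2 * k + 1) (scale_index k i) (scale_index k j) \<longleftrightarrow> weave_edge False True i j"
proof -
  have "scale_index k i \<in> {1..k} \<and> scale_index k j \<in> {1..k} \<longleftrightarrow> even i \<and> even j"
    using assms scale_index_le_iff_even scale_index_in_range[of k] by (metis atLeastAtMost_iff)
  then show ?thesis
    using T_edge_scale_index[OF assms] T_edge_scale_index[OF assms(2,1)]
    by (cases "i = j") (auto simp: U_edge_def weave_edge_def add.commute)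
qed

lemma weave_edge_iso_T_or_U:
  assumes "odd m"
  shows "tourn_iso {1..m} (weave_edge False se) {1..m} (if se then U_edge m else T_edge m)"
proof -
  obtain k where m: "m = 2 * k + 1" using assms by (rule oddE)
  show ?thesis
    unfolding tourn_iso_def m
    using bij_betw_scale_index T_edge_scale_index U_edge_scale_index
    by (intro exI[of _ "scale_index k"]) auto
qed

text \<open>Index \<open>0\<close> stands for the added vertex \<open>v\<close>.\<close>

definition apex_edge :: "bool \<Rightarrow> bool \<Rightarrow> nat \<Rightarrow> nat \<Rightarrow> bool" where
  "apex_edge so se i j \<longleftrightarrow> (if i = 0 then odd j else if j = 0 then even i else weave_edge so se i j)"

lemma apex_edge_of_weave:
  assumes W: "weave V E n w" and T: "tournament (insert v V) E" and v: "v \<notin> V"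
    and v_odd: "\<forall>i\<in>{1..n}. odd i \<longrightarrow> E v (w i)" and v_even: "\<forall>i\<in>{1..n}. even i \<longrightarrow> E (w i) v"
    and e: "\<forall>i\<in>{1..n}. \<forall>j\<in>{1..n}. E (w i) (w j) \<longleftrightarrow> weave_edge so se i j"
  shows "tourn_iso {0..n} (apex_edge so se) (insert v V) E"
proof -
  let ?f = "w(0 := v)"
  have "bij_betw ?f {1..n} V" using bij_betw_weave[OF W] by (rule bij_betw_cong[THEN iffD1, rotated]) simp
  then have "bij_betw ?f ({1..n} \<union> {0}) (V \<union> {?f 0})" using v by (intro notIn_Un_bij_betw) simp_all
  moreover have "{1..n} \<union> {0} = {0..n}" by auto
  ultimately have f: "bij_betw ?f {0..n} (insert v V)" by simp
  have wV: "w i \<in> V" if "i \<in> {1..n}" for i using bij_betwE[OF bij_betw_weave[OF W]] that by blast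
  have v_w: "E v (w j) \<longleftrightarrow> odd j" and w_v: "E (w j) v \<longleftrightarrow> even j" if j: "j \<in> {1..n}" for j
  proof -
    have "v \<noteq> w j" using wV[OF j] v by blast
    then have "E v (w j) \<longleftrightarrow> \<not> E (w j) v" using tournament_edge_flip[OF T] wV[OF j] by blast
    then show "E v (w j) \<longleftrightarrow> odd j" and "E (w j) v \<longleftrightarrow> even j" using v_odd v_even j by auto
  qed
  have "E (?f i) (?f j) \<longleftrightarrow> apex_edge so se i j" if "i \<in> {0..n}" "j \<in> {0..n}" for i j
    using that e v_w w_v T by (auto simp: apex_edge_def tournament_def)
  with f show ?thesis unfolding tourn_iso_def by blast
qed

lemma prime_apex_edge_even:
  assumes P: "prime_tournament {0..n} (apex_edge so se)" and n: "2 \<le> n"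
  shows "even n"
proof (rule ccontr)
  assume "\<not> even n"
  then have odd: "odd n" by simp
  have V: "3 \<le> card {0..n}" using n by simp
  show False
  proof (cases so)
    case True
    then have "\<forall>i\<in>{0..n} - {n}. apex_edge so se i n" using odd by (auto simp: apex_edge_def weave_edge_def)
    then show False using prime_tournament_no_source_or_sink[OF P V, of n] by auto
  next
    case False
    have "homogeneous {0..n} (apex_edge so se) {0, n}"
      using False odd by (auto simp: homogeneous_def apex_edge_def weave_edge_def)
    moreover have "0 \<noteq> n" using n by simp
    ultimately show False using prime_tournament_no_homogeneous_pair[OF P V] by blast
  qed
qed

lemma bij_betw_zero_to_last: "bij_betw (\<lambda>i. if i = 0 then n + 1 else i) {0..n::nat} {1..n + 1}"
  unfolding bij_betw_def inj_on_def
  by (auto simp: image_def intro: bexI[of _ 0] rev_bexI)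

lemma apex_edge_iso_append:
  assumes "even n"
  shows "tourn_iso {0..n} (apex_edge False se) {1..n + 1} (weave_edge False se)"
  unfolding tourn_iso_def using assms bij_betw_zero_to_last[of n]
  by (intro exI[of _ "\<lambda>i. if i = 0 then n + 1 else i"])
    (auto simp: apex_edge_def weave_edge_def)

lemma apex_edge_iso_prepend:
  "tourn_iso {0..n} (apex_edge True False) {1..n + 1} (weave_edge False True)"
  unfolding tourn_iso_def
  by (intro exI[of _ Suc]) (auto simp: bij_betw_Suc apex_edge_def weave_edge_def; presburger)

lemma apex_edge_iso_W:
  "tourn_iso {0..n} (apex_edge True True) {1..n + 1} (W_edge (n + 1))"
  unfolding tourn_iso_def using bij_betw_zero_to_last[of n]
  by (intro exI[of _ "\<lambda>i. if i = 0 then n + 1 else i"])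
    (auto simp: apex_edge_def weave_edge_def W_edge_def)

lemma prime_weave_iso_T_or_U:
  assumes W: "weave V E n w" and V: "3 \<le> card V" and P: "prime_tournament V E"
  shows "\<exists>m. odd m \<and> (tourn_iso V E {1..m} (T_edge m) \<or> tourn_iso V E {1..m} (U_edge m))"
proof -
  obtain so se where "\<forall>i\<in>{1..n}. \<forall>j\<in>{1..n}. E (w i) (w j) \<longleftrightarrow> weave_edge so se i j"
    using weave_edge_of_weave[OF W] .
  then have iso: "tourn_iso {1..n} (weave_edge so se) V E"
    using bij_betw_weave[OF W] unfolding tourn_iso_def by blast
  have "\<not> so" and n: "odd n"
    using prime_weave_edgeD[OF tourn_iso_prime_tournament[OF iso P]] V card_weave[OF W] by simp_all
  with iso have "tourn_iso V E {1..n} (weave_edge False se)" by (simp add: tourn_iso_sym)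
  then have "tourn_iso V E {1..n} (if se then U_edge n else T_edge n)"
    using tourn_iso_trans weave_edge_iso_T_or_U[OF n] by blast
  with n show ?thesis by (cases se) auto
qed

lemma prime_weave_apex_iso_T_U_or_W:
  assumes W: "weave V E n w" and V: "2 \<le> card V" and v: "v \<notin> V"
    and v_odd: "\<forall>i\<in>{1..n}. odd i \<longrightarrow> E v (w i)" and v_even: "\<forall>i\<in>{1..n}. even i \<longrightarrow> E (w i) v"
    and P: "prime_tournament (insert v V) E"
  shows "\<exists>m. odd m \<and> (tourn_iso (insert v V) E {1..m} (T_edge m)
                     \<or> tourn_iso (insert v V) E {1..m} (U_edge m)
                     \<or> tourn_iso (insert v V) E {1..m} (W_edge m))"
proof -
  obtain so se where "\<forall>i\<in>{1..n}. \<forall>j\<in>{1..n}. E (w i) (w j) \<longleftrightarrow> weave_edge so se i j"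
    using weave_edge_of_weave[OF W] .
  then have iso: "tourn_iso {0..n} (apex_edge so se) (insert v V) E"
    using apex_edge_of_weave[OF W _ v v_odd v_even] P by (simp add: prime_tournament_def)
  have "even n"
    using prime_apex_edge_even[OF tourn_iso_prime_tournament[OF iso P]] V card_weave[OF W] by simp
  then have m: "odd (n + 1)" by simp
  have "tourn_iso {0..n} (apex_edge so se) {1..n + 1} (T_edge (n + 1))
      \<or> tourn_iso {0..n} (apex_edge so se) {1..n + 1} (U_edge (n + 1))
      \<or> tourn_iso {0..n} (apex_edge so se) {1..n + 1} (W_edge (n + 1))"
  proof (cases so)
    case False
    then show ?thesis
      using tourn_iso_trans[OF apex_edge_iso_append[OF \<open>even n\<close>] weave_edge_iso_T_or_U[OF m, of se]]
      by (cases se) simp_all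
  next
    case True
    then show ?thesis
      using tourn_iso_trans[OF apex_edge_iso_prepend weave_edge_iso_T_or_U[OF m, of True]] apex_edge_iso_W
      by (cases se) simp_all
  qed
  then show ?thesis using tourn_iso_trans[OF tourn_iso_sym[OF iso]] m by blast
qed

theorem corollary3p3:
  fixes V :: "'a set" and E :: "'a \<Rightarrow> 'a \<Rightarrow> bool" and n :: nat and w :: "nat \<Rightarrow> 'a"
  assumes W: "weave V E n w"
  shows "(card V \<ge> 3 \<and> prime_tournament V E \<longrightarrow>
            (\<exists>m. odd m \<and> (tourn_iso V E {1..m} (T_edge m) \<or> tourn_iso V E {1..m} (U_edge m))))
       \<and> (\<forall>v. card V \<ge> 2 \<and> v \<notin> V
              \<and> (\<forall>i\<in>{1..n}. odd i \<longrightarrow> E v (w i))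
              \<and> (\<forall>i\<in>{1..n}. even i \<longrightarrow> E (w i) v)
              \<and> prime_tournament (insert v V) E \<longrightarrow>
            (\<exists>m. odd m \<and> (tourn_iso (insert v V) E {1..m} (T_edge m)
                          \<or> tourn_iso (insert v V) E {1..m} (U_edge m)
                          \<or> tourn_iso (insert v V) E {1..m} (W_edge m))))"
  using prime_weave_iso_T_or_U[OF W] prime_weave_apex_iso_T_U_or_W[OF W] by blast

end
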